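(* Let $\alpha\in[-1,1]$ and let $F_\alpha(z)=\dfrac{z(1-\alpha z)}{1-z^2}$ for $z\in E$. Then $\Re\big[(1-z^2)F_\alpha'(z)\big]>0$ for all $z\in E$; consequently $F_\alpha$ is univalent in $E$ and maps $E$ onto a domain convex in the direction of the imaginary axis. Moreover, if $f=h+\overline{g}$ is a locally univalent, sense-preserving harmonic mapping in $E$ with $h(0)=g(0)=0$, $h'(0)=1$, $g'(0)=0$ and $h+g=F_\alpha$, then $f\in S_H$ and $f$ maps $E$ onto a domain convex in the direction of the imaginary axis.
   Context: $E=\{z\in\mathbb{C}:|z|<1\}$. A harmonic mapping $f=h+\overline{g}$ on $E$ (with $h,g$ analytic) is locally univalent and sense-preserving iff $h'\neq0$ in $E$ and its dilatation $\omega=g'/h'$ satisfies $|\omega|<1$ in $E$. $S_H$ denotes the class of harmonic, univalent, sense-preserving mappings $f=h+\overline{g}$ of $E$ normalized by $f(0)=0$, $f_z(0)=1$. A domain $\Omega$ is convex in the direction of the imaginary axis if every line parallel to the imaginary axis has connected or empty intersection with $\Omega$. *)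

theory Defs
  imports "HOL-Analysis.Analysis"
begin

definition unit_disc :: "complex set" where
  "unit_disc = ball 0 1"

definition F_alpha :: "real \<Rightarrow> complex \<Rightarrow> complex" where
  "F_alpha \<alpha> z = z * (1 - complex_of_real \<alpha> * z) / (1 - z^2)"

definition convex_imag_dir :: "complex set \<Rightarrow> bool" where
  "convex_imag_dir \<Omega> \<longleftrightarrow> (\<forall>x::real. connected (\<Omega> \<inter> {w. Re w = x}))"

definition loc_univ_sense_pres :: "(complex \<Rightarrow> complex) \<Rightarrow> (complex \<Rightarrow> complex) \<Rightarrow> bool" where
  "loc_univ_sense_pres h g \<longleftrightarrow>
     (\<forall>z\<in>unit_disc. deriv h z \<noteq> 0 \<and> norm (deriv g z / deriv h z) < 1)"

definition S_H :: "(complex \<Rightarrow> complex) set" where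
  "S_H = {f. \<exists>h g. h holomorphic_on unit_disc \<and> g holomorphic_on unit_disc \<and>
             (\<forall>z\<in>unit_disc. f z = h z + cnj (g z)) \<and>
             inj_on f unit_disc \<and> loc_univ_sense_pres h g \<and>
             f 0 = 0 \<and> deriv h 0 = 1}"

end

theory Submission
  imports Defs "HOL-Complex_Analysis.Conformal_Mappings"
begin

(* Write a = (1+alpha)/2 and b = (1-alpha)/2, so a, b >= 0 and a + b = 1, and use the
   Cayley variable w = (1+z)/(1-z), which maps the unit disc E onto the right half-plane.
   A direct computation gives
       (1 - z^2) F'(z) = b w + a/w        and        2 F(z) - alpha = b w - a/w.
   The first identity gives Re[(1 - z^2) F'] > 0 at once.  Univalence of F is elementary:
   F(z) - F(w) factors as (z - w)(1 - alpha(z+w) + zw)/((1-z^2)(1-w^2)) and the second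
   factor has no zeros in the bidisc.  The second identity shows that F(E) is an affine
   image of the "Joukowski region" {b w - a/w : Re w > 0}, which we describe explicitly
   and whose vertical slices are convex.  Finally the Clunie--Sheil-Small shear
   construction, proved here for an arbitrary open set, shows that f = h + conj g is
   univalent with connected vertical slices whenever h + g is univalent with convex
   vertical slices and the dilatation of f has modulus < 1: on every vertical line
   Im f is a strictly increasing function of Im (h + g), because its derivative is
   Re[(h' - g')/(h' + g')] > 0. *)

lemma mem_unit_disc: "z \<in> unit_disc \<longleftrightarrow> norm z < 1"
  by (simp add: unit_disc_def)

lemma one_pm_nonzero:
  assumes "norm (z::complex) < 1"
  shows "1 - z \<noteq> 0" and "1 + z \<noteq> 0"
  using assms by (auto simp: add_eq_0_iff)

lemma Re_inverse_pos: "Re (w::complex) > 0 \<Longrightarrow> Re (1 / w) > 0"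
  by (simp add: Re_divide add_pos_nonneg)

lemma cayley_Re_pos:
  assumes "norm (z::complex) < 1"
  shows "Re ((1 + z) / (1 - z)) > 0"
proof -
  have "norm z ^ 2 < 1" using assms by (simp add: abs_square_less_1)
  then have "Re z ^ 2 + Im z ^ 2 < 1" by (simp add: cmod_power2)
  moreover have "(1 - Re z)^2 + (Im z)^2 > 0"
    using one_pm_nonzero(1)[OF assms] by (simp add: complex_eq_iff add_pos_nonneg sum_power2_gt_zero_iff)
  ultimately show ?thesis
    by (simp add: Re_divide power2_eq_square algebra_simps)
qed

lemma cayley_inverse:
  assumes "Re (w::complex) > 0"
  obtains z where "norm z < 1" and "(1 + z) / (1 - z) = w"
proof
  have wp: "w + 1 \<noteq> 0" using assms by (auto simp: complex_eq_iff)
  have "(Re w - 1)^2 + Im w^2 < (Re w + 1)^2 + Im w^2"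
    using assms by (simp add: power2_eq_square algebra_simps)
  then have "norm (w - 1) ^ 2 < norm (w + 1) ^ 2" by (simp add: cmod_power2)
  then have "norm (w - 1) < norm (w + 1)" by (simp add: power_less_imp_less_base)
  then show "norm ((w - 1) / (w + 1)) < 1" using wp by (simp add: norm_divide divide_less_eq)
  have "1 + (w - 1) / (w + 1) = 2 * w / (w + 1)" and "1 - (w - 1) / (w + 1) = 2 / (w + 1)"
    using wp by (simp_all add: field_simps)
  then show "(1 + (w - 1) / (w + 1)) / (1 - (w - 1) / (w + 1)) = w"
    using wp by simp
qed

lemma Re_convex_combination_pos:
  assumes "a \<ge> 0" "b \<ge> 0" "a + b = 1" "Re w > 0"
  shows "Re (of_real b * w + of_real a / w) > 0"
proof -
  have "Re (of_real b * w + of_real a / w) = b * Re w + a * Re (1 / w)"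
    by (simp add: Re_divide)
  moreover have "Re (1 / w) > 0" using assms(4) by (rule Re_inverse_pos)
  ultimately show ?thesis
    using assms by (smt (verit) mult_nonneg_nonneg mult_pos_pos)
qed

lemma F_alpha_has_derivative:
  assumes "norm z < 1"
  shows "(F_alpha \<alpha> has_field_derivative (1 - 2*\<alpha>*z + z^2) / (1 - z^2)^2) (at z)"
proof -
  have "z^2 \<noteq> 1" using assms by (auto simp: power2_eq_1_iff)
  then show ?thesis
    unfolding F_alpha_def[abs_def]
    by (auto intro!: derivative_eq_intros simp: power2_eq_square algebra_simps)
qed

lemma F_alpha_cayley_forms:
  assumes z: "norm z < 1" and w: "w = (1 + z) / (1 - z)"
  shows "(1 - z^2) * deriv (F_alpha \<alpha>) z = of_real ((1-\<alpha>)/2) * w + of_real ((1+\<alpha>)/2) / w"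
    and "2 * F_alpha \<alpha> z - of_real \<alpha> = of_real ((1-\<alpha>)/2) * w - of_real ((1+\<alpha>)/2) / w"
proof -
  define D where "D = (1 - z) * (1 + z)"
  have nz: "1 - z \<noteq> 0" "1 + z \<noteq> 0" using one_pm_nonzero[OF z] by auto
  then have D: "D \<noteq> 0" "1 - z^2 = D" by (simp_all add: D_def) (simp add: algebra_simps power2_eq_square)
  have combine: "of_real c * w + s * (of_real d / w) = (of_real c * (1+z)^2 + s * of_real d * (1-z)^2) / D"
    for c d s using nz unfolding w D_def by (simp add: field_simps power2_eq_square)
  have "deriv (F_alpha \<alpha>) z = (1 - 2 * of_real \<alpha> * z + z^2) / (1 - z^2)^2"
    using F_alpha_has_derivative[OF z] by (rule DERIV_imp_deriv)
  then have "(1 - z^2) * deriv (F_alpha \<alpha>) z = (1 - 2 * of_real \<alpha> * z + z^2) / D"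
    using D by (simp add: power2_eq_square)
  also have "\<dots> = of_real ((1-\<alpha>)/2) * w + 1 * (of_real ((1+\<alpha>)/2) / w)"
    unfolding combine using D(1) by (simp add: field_simps power2_eq_square)
  finally show "(1 - z^2) * deriv (F_alpha \<alpha>) z = of_real ((1-\<alpha>)/2) * w + of_real ((1+\<alpha>)/2) / w"
    by simp
  have "2 * F_alpha \<alpha> z - of_real \<alpha> = (2 * z * (1 - of_real \<alpha> * z) - of_real \<alpha> * D) / D"
    unfolding F_alpha_def D(2) using D(1) by (simp add: field_simps)
  also have "\<dots> = of_real ((1-\<alpha>)/2) * w + (-1) * (of_real ((1+\<alpha>)/2) / w)"
  proof -
    have "2 * z * (1 - of_real \<alpha> * z) - of_real \<alpha> * D
        = of_real ((1-\<alpha>)/2) * (1+z)^2 + (-1) * of_real ((1+\<alpha>)/2) * (1-z)^2"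
      unfolding D_def by (simp add: field_simps power2_eq_square)
    then show ?thesis unfolding combine by simp
  qed
  finally show "2 * F_alpha \<alpha> z - of_real \<alpha> = of_real ((1-\<alpha>)/2) * w - of_real ((1+\<alpha>)/2) / w"
    by (simp only: mult_minus1 diff_conv_add_uminus)
qed

lemma F_alpha_Re_pos:
  assumes "-1 \<le> \<alpha>" "\<alpha> \<le> 1" "norm z < 1"
  shows "Re ((1 - z^2) * deriv (F_alpha \<alpha>) z) > 0"
  unfolding F_alpha_cayley_forms(1)[OF assms(3) refl]
  using assms by (intro Re_convex_combination_pos cayley_Re_pos) (auto simp: field_simps)

text \<open>The factor that remains after cancelling \<open>z - w\<close> from \<open>F(z) - F(w)\<close>
  has no zeros in the bidisc; this is the whole content of the univalence of \<open>F\<^sub>\<alpha>\<close>.\<close>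
lemma F_alpha_difference_factor_nonzero:
  fixes z w :: complex
  assumes "\<bar>\<alpha>\<bar> \<le> 1" and z: "norm z < 1" and w: "norm w < 1"
  shows "1 - of_real \<alpha> * (z + w) + z * w \<noteq> 0"
proof
  assume "1 - of_real \<alpha> * (z + w) + z * w = 0"
  then have solved: "w * (z - of_real \<alpha>) = of_real \<alpha> * z - 1"
    by (simp add: algebra_simps)
  have "z \<noteq> of_real \<alpha>"
  proof
    assume "z = of_real \<alpha>"
    with solved have "of_real (\<alpha>^2 - 1) = (0::complex)" by (simp add: algebra_simps power2_eq_square)
    then have "\<alpha>^2 = 1" by (simp only: of_real_eq_0_iff)
    then have "\<bar>\<alpha>\<bar> = 1" by (smt (verit) power2_eq_1_iff)
    with \<open>z = of_real \<alpha>\<close> z show False by simp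
  qed
  then have pos: "norm (z - of_real \<alpha>) ^ 2 > 0" by simp
  have "norm z ^ 2 < 1" using z by (simp add: abs_square_less_1)
  then have "Re z ^ 2 + Im z ^ 2 < 1" by (simp add: cmod_power2)
  moreover have "\<alpha>^2 \<le> 1" using assms(1) by (simp add: abs_square_le_1)
  moreover have "norm (of_real \<alpha> * z - 1) ^ 2 - norm (z - of_real \<alpha>) ^ 2
      = (1 - \<alpha>^2) * (1 - (Re z ^ 2 + Im z ^ 2))"
    by (simp add: cmod_power2) (simp add: power2_eq_square algebra_simps)
  ultimately have "norm (z - of_real \<alpha>) ^ 2 \<le> norm (of_real \<alpha> * z - 1) ^ 2"
    by (smt (verit) mult_nonneg_nonneg)
  also have "\<dots> = norm w ^ 2 * norm (z - of_real \<alpha>) ^ 2"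
    by (simp add: solved[symmetric] norm_mult power_mult_distrib)
  finally have "1 \<le> norm w ^ 2" using pos by simp
  moreover have "norm w ^ 2 < 1" using w by (simp add: abs_square_less_1)
  ultimately show False by simp
qed

lemma F_alpha_inj:
  assumes "-1 \<le> \<alpha>" "\<alpha> \<le> 1"
  shows "inj_on (F_alpha \<alpha>) unit_disc"
proof (rule inj_onI)
  fix z w assume "z \<in> unit_disc" "w \<in> unit_disc" and eq: "F_alpha \<alpha> z = F_alpha \<alpha> w"
  then have z: "norm z < 1" and w: "norm w < 1" by (auto simp: mem_unit_disc)
  have "1 - z^2 \<noteq> 0" "1 - w^2 \<noteq> 0"
    using z w by (auto simp: power2_eq_1_iff)
  with eq have "z * (1 - of_real \<alpha> * z) * (1 - w^2) = w * (1 - of_real \<alpha> * w) * (1 - z^2)"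
    unfolding F_alpha_def by (simp add: field_simps)
  then have "(z - w) * (1 - of_real \<alpha> * (z + w) + z * w) = 0"
    by (simp add: algebra_simps power2_eq_square)
  moreover have "1 - of_real \<alpha> * (z + w) + z * w \<noteq> 0"
    using assms z w by (intro F_alpha_difference_factor_nonzero) auto
  ultimately show "z = w" by simp
qed

text \<open>For \<open>a, b \<ge> 0\<close> with \<open>a + b = 1\<close>, the image of the right half-plane under the
  Joukowski-type map \<open>w \<mapsto> b w - a/w\<close>, described explicitly: the full plane minus a
  closed half-plane (\<open>a = 0\<close> or \<open>b = 0\<close>) or minus two slits of the imaginary axis.\<close>
definition joukowski_region :: "real \<Rightarrow> real \<Rightarrow> complex set" where
  "joukowski_region a b =
     {\<zeta>. (a = 0 \<longrightarrow> Re \<zeta> > 0) \<and> (b = 0 \<longrightarrow> Re \<zeta> < 0) \<and> (Re \<zeta> = 0 \<longrightarrow> Im \<zeta> ^ 2 < 4 * a * b)}"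

lemma joukowski_image_subset:
  assumes ab: "a \<ge> 0" "b \<ge> 0" "a + b = 1" and w: "Re w > 0"
  shows "of_real b * w - of_real a / w \<in> joukowski_region a b"
proof -
  define u v r where "u = Re w" and "v = Im w" and "r = u^2 + v^2"
  have u: "u > 0" and r: "r > 0" and vr: "v^2 < r"
    using w by (auto simp: u_def v_def r_def add_pos_nonneg)
  have re: "Re (of_real b * w - of_real a / w) = u * (b - a / r)"
    unfolding u_def v_def r_def by (simp add: Re_divide power2_eq_square algebra_simps)
  have im: "Im (of_real b * w - of_real a / w) = v * (b + a / r)"
    unfolding u_def v_def r_def by (simp add: Im_divide power2_eq_square algebra_simps)
  have "(v * (b + a / r))^2 < 4 * a * b" if "u * (b - a / r) = 0"
  proof -
    have br: "a = b * r" using that u r by (simp add: field_simps)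
    then have "b > 0" using ab r by (cases "b = 0") auto
    have "(v * (b + a / r))^2 = 4 * b^2 * v^2" using br r by (simp add: power2_eq_square)
    also have "\<dots> < 4 * b^2 * r" using vr \<open>b > 0\<close> by simp
    also have "\<dots> = 4 * a * b" using br by (simp add: power2_eq_square)
    finally show ?thesis .
  qed
  then show ?thesis
    unfolding joukowski_region_def mem_Collect_eq re im using ab u r by auto
qed

text \<open>For \<open>a, b > 0\<close> the equation \<open>b w - a/w = \<zeta>\<close> is a quadratic in \<open>w\<close> and has a root.\<close>
lemma joukowski_root:
  fixes \<zeta> :: complex
  assumes "a > 0" "b > 0"
  obtains w where "w \<noteq> 0" "\<zeta> = of_real b * w - of_real a / w"
proof -
  define d where "d = csqrt (\<zeta>^2 + 4 * of_real a * of_real b)"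
  define w where "w = (\<zeta> + d) / (2 * of_real b)"
  have "d^2 = \<zeta>^2 + 4 * of_real a * of_real b" unfolding d_def by simp
  then have q: "of_real b * w^2 - \<zeta> * w - of_real a = 0"
    unfolding w_def using assms by (simp add: field_simps power2_eq_square)
  then have "w \<noteq> 0" using assms by auto
  moreover have "\<zeta> = of_real b * w - of_real a / w"
    using q \<open>w \<noteq> 0\<close> by (simp add: field_simps power2_eq_square)
  ultimately show ?thesis by (rule that)
qed

text \<open>The two roots of \<open>b w - a/w = \<zeta>\<close>
  have product \<open>-a/b\<close>, so their real parts have opposite signs; both vanish only on the
  excluded slits of the imaginary axis.\<close>
lemma joukowski_region_subset_image:
  assumes ab: "a \<ge> 0" "b \<ge> 0" "a + b = 1" and \<zeta>: "\<zeta> \<in> joukowski_region a b"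
  shows "\<exists>w. Re w > 0 \<and> \<zeta> = of_real b * w - of_real a / w"
proof -
  consider "b = 0" | "a = 0" | "a > 0" "b > 0" using ab by linarith
  then show ?thesis
  proof cases
    case 1
    then have "Re \<zeta> < 0" "a = 1" using \<zeta> ab by (auto simp: joukowski_region_def)
    moreover have "Re \<zeta> / (Re \<zeta> ^ 2 + Im \<zeta> ^ 2) < 0"
      using \<open>Re \<zeta> < 0\<close> by (intro divide_neg_pos) (auto simp: add_pos_nonneg)
    ultimately have "Re (- 1 / \<zeta>) > 0" "\<zeta> = of_real b * (- 1 / \<zeta>) - of_real a / (- 1 / \<zeta>)"
      using 1 by (auto simp: Re_divide power2_eq_square)
    then show ?thesis by blast
  next
    case 2
    then have "Re \<zeta> > 0" "b = 1" using \<zeta> ab by (auto simp: joukowski_region_def)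
    then show ?thesis using 2 by auto
  next
    case 3
    obtain w where w0: "w \<noteq> 0" and w: "\<zeta> = of_real b * w - of_real a / w"
      using joukowski_root[OF 3] .
    define w' where "w' = (- (a / b)) *\<^sub>R inverse w"
    have w': "\<zeta> = of_real b * w' - of_real a / w'"
      unfolding w w'_def scaleR_conv_of_real using 3 w0 by (simp add: field_simps)
    have Re_w': "Re w' = - (a / b) * (Re w / (Re w ^ 2 + Im w ^ 2))"
      unfolding w'_def by (simp add: power2_eq_square)
    have "Re w \<noteq> 0"
    proof
      assume "Re w = 0"
      define v where "v = Im w"
      have v: "w = \<i> * of_real v" "v \<noteq> 0" using \<open>Re w = 0\<close> w0 by (auto simp: v_def complex_eq_iff)
      then have "\<zeta> = \<i> * of_real (b * v + a / v)" unfolding w by (simp add: field_simps)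
      then have "Im \<zeta> ^ 2 < 4 * a * b" and "Im \<zeta> = b * v + a / v"
        using \<zeta> unfolding joukowski_region_def by auto
      moreover have "(b * v + a / v)^2 - 4 * a * b = (b * v - a / v)^2"
        using v by (simp add: power2_eq_square field_simps)
      ultimately show False by (smt (verit) zero_le_power2)
    qed
    then have "Re w > 0 \<or> Re w' > 0"
      unfolding Re_w' using 3 by (auto simp: add_pos_nonneg mult_neg_pos zero_less_divide_iff
          mult_less_0_iff divide_less_0_iff)
    then show ?thesis using w w' by blast
  qed
qed

lemma joukowski_region_eq:
  assumes "a \<ge> 0" "b \<ge> 0" "a + b = 1"
  shows "joukowski_region a b = (\<lambda>w. of_real b * w - of_real a / w) ` {w. Re w > 0}"
  using joukowski_image_subset[OF assms] joukowski_region_subset_image[OF assms] by auto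

text \<open>Each vertical slice of the region is convex: it is a line, a segment of the
  imaginary axis, or empty, and the slit condition is preserved by convex combinations.\<close>
lemma joukowski_region_vertically_convex:
  "convex (joukowski_region a b \<inter> {\<zeta>. Re \<zeta> = x})"
  unfolding convex_alt
proof (intro ballI allI impI)
  fix \<zeta>1 \<zeta>2 :: complex and u :: real
  assume \<zeta>1: "\<zeta>1 \<in> joukowski_region a b \<inter> {\<zeta>. Re \<zeta> = x}"
    and \<zeta>2: "\<zeta>2 \<in> joukowski_region a b \<inter> {\<zeta>. Re \<zeta> = x}" and u: "0 \<le> u \<and> u \<le> 1"
  define \<zeta> where "\<zeta> = (1 - u) *\<^sub>R \<zeta>1 + u *\<^sub>R \<zeta>2"
  have re: "Re \<zeta> = x" using \<zeta>1 \<zeta>2 unfolding \<zeta>_def by (simp add: algebra_simps)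
  have "Im \<zeta> ^ 2 < 4 * a * b" if "x = 0"
  proof -
    have h1: "Im \<zeta>1 ^ 2 < 4 * a * b" and h2: "Im \<zeta>2 ^ 2 < 4 * a * b"
      using \<zeta>1 \<zeta>2 that by (auto simp: joukowski_region_def)
    have "Im \<zeta> ^ 2 \<le> (1 - u) * Im \<zeta>1 ^ 2 + u * Im \<zeta>2 ^ 2"
    proof -
      have "(1 - u) * Im \<zeta>1 ^ 2 + u * Im \<zeta>2 ^ 2 - Im \<zeta> ^ 2 = u * (1 - u) * (Im \<zeta>1 - Im \<zeta>2)^2"
        unfolding \<zeta>_def by (simp add: power2_eq_square algebra_simps)
      then show ?thesis using u by (smt (verit) mult_nonneg_nonneg zero_le_power2)
    qed
    also have "\<dots> < 4 * a * b"
    proof (cases "u = 0")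
      case True then show ?thesis using h1 by simp
    next
      case False
      then have "u * Im \<zeta>2 ^ 2 < u * (4 * a * b)" using h2 u by simp
      moreover have "(1 - u) * Im \<zeta>1 ^ 2 \<le> (1 - u) * (4 * a * b)"
        using h1 u by (intro mult_left_mono) auto
      ultimately show ?thesis by (simp add: algebra_simps)
    qed
    finally show ?thesis .
  qed
  then show "\<zeta> \<in> joukowski_region a b \<inter> {\<zeta>. Re \<zeta> = x}"
    using \<zeta>1 re by (auto simp: joukowski_region_def)
qed

text \<open>By the Cayley form of \<open>2F - \<alpha>\<close>, the image \<open>F\<^sub>\<alpha>(E)\<close> is an affine image of a
  Joukowski region.\<close>
lemma F_alpha_image_iff:
  assumes "-1 \<le> \<alpha>" "\<alpha> \<le> 1"
  shows "p \<in> F_alpha \<alpha> ` unit_disc \<longleftrightarrow> 2 * p - of_real \<alpha> \<in> joukowski_region ((1+\<alpha>)/2) ((1-\<alpha>)/2)"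
proof -
  let ?T = "\<lambda>w. of_real ((1-\<alpha>)/2) * w - of_real ((1+\<alpha>)/2) / w"
  have "p \<in> F_alpha \<alpha> ` unit_disc \<longleftrightarrow> (\<exists>w. Re w > 0 \<and> 2 * p - of_real \<alpha> = ?T w)"
  proof
    assume "p \<in> F_alpha \<alpha> ` unit_disc"
    then obtain z where z: "norm z < 1" and "p = F_alpha \<alpha> z" by (auto simp: mem_unit_disc)
    then have "2 * p - of_real \<alpha> = ?T ((1 + z) / (1 - z))"
      using F_alpha_cayley_forms(2)[OF z refl] by simp
    then show "\<exists>w. Re w > 0 \<and> 2 * p - of_real \<alpha> = ?T w" using cayley_Re_pos[OF z] by blast
  next
    assume "\<exists>w. Re w > 0 \<and> 2 * p - of_real \<alpha> = ?T w"
    then obtain w where "Re w > 0" and p: "2 * p - of_real \<alpha> = ?T w" by blast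
    obtain z where z: "norm z < 1" and w: "(1 + z) / (1 - z) = w"
      using cayley_inverse[OF \<open>Re w > 0\<close>] .
    have "2 * F_alpha \<alpha> z - of_real \<alpha> = 2 * p - of_real \<alpha>"
      using F_alpha_cayley_forms(2)[OF z w[symmetric]] p by simp
    then show "p \<in> F_alpha \<alpha> ` unit_disc" using z by (auto simp: mem_unit_disc)
  qed
  also have "\<dots> \<longleftrightarrow> 2 * p - of_real \<alpha> \<in> joukowski_region ((1+\<alpha>)/2) ((1-\<alpha>)/2)"
    using assms by (subst joukowski_region_eq) (auto simp: field_simps)
  finally show ?thesis .
qed

text \<open>Part C of the theorem, in the strong form needed later: every vertical slice of
  \<open>F\<^sub>\<alpha>(E)\<close> is convex, being an affine image of a vertical slice of the Joukowski region.\<close>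
lemma F_alpha_vertical_slices_convex:
  assumes "-1 \<le> \<alpha>" "\<alpha> \<le> 1"
  shows "convex (F_alpha \<alpha> ` unit_disc \<inter> {p. Re p = x})"
proof -
  let ?J = "joukowski_region ((1+\<alpha>)/2) ((1-\<alpha>)/2) \<inter> {\<zeta>. Re \<zeta> = 2 * x - \<alpha>}"
  have "F_alpha \<alpha> ` unit_disc \<inter> {p. Re p = x} = (\<lambda>\<zeta>. of_real (\<alpha>/2) + (1/2) *\<^sub>R \<zeta>) ` ?J"
  proof (intro equalityI subsetI)
    fix p assume "p \<in> F_alpha \<alpha> ` unit_disc \<inter> {p. Re p = x}"
    then have "2 * p - of_real \<alpha> \<in> ?J" and "p = of_real (\<alpha>/2) + (1/2) *\<^sub>R (2 * p - of_real \<alpha>)"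
      using F_alpha_image_iff[OF assms] by (auto simp: scaleR_conv_of_real field_simps)
    then show "p \<in> (\<lambda>\<zeta>. of_real (\<alpha>/2) + (1/2) *\<^sub>R \<zeta>) ` ?J" by blast
  next
    fix p assume "p \<in> (\<lambda>\<zeta>. of_real (\<alpha>/2) + (1/2) *\<^sub>R \<zeta>) ` ?J"
    then obtain \<zeta> where "\<zeta> \<in> ?J" and p: "p = of_real (\<alpha>/2) + (1/2) *\<^sub>R \<zeta>" by blast
    moreover have "2 * p - of_real \<alpha> = \<zeta>" unfolding p by (simp add: scaleR_conv_of_real field_simps)
    moreover have "Re p = x" using \<open>\<zeta> \<in> ?J\<close> unfolding p by (simp add: diff_divide_distrib)
    ultimately show "p \<in> F_alpha \<alpha> ` unit_disc \<inter> {p. Re p = x}"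
      using F_alpha_image_iff[OF assms] by auto
  qed
  moreover have "convex ?J" by (rule joukowski_region_vertically_convex)
  ultimately show ?thesis by (simp add: convex_affinity)
qed

text \<open>If the dilatation \<open>\<omega> = g'/h'\<close> satisfies \<open>|\<omega>| < 1\<close>, then
  \<open>(h' - g')/(h' + g') = (1-\<omega>)/(1+\<omega>)\<close> has positive real part.\<close>
lemma Re_dilatation_quotient_pos:
  assumes "norm (\<omega>::complex) < 1"
  shows "Re ((1 - \<omega>) / (1 + \<omega>)) > 0"
  using cayley_Re_pos[of "- \<omega>"] assms by simp

lemma vertical_parameters_convex:
  assumes "convex (A \<inter> {p. Re p = x})"
  shows "convex {t. Complex x t \<in> A}"
  unfolding convex_alt
proof (intro ballI allI impI)
  fix t1 t2 u :: real
  assume "t1 \<in> {t. Complex x t \<in> A}" "t2 \<in> {t. Complex x t \<in> A}" "0 \<le> u \<and> u \<le> 1"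
  then have "(1 - u) *\<^sub>R Complex x t1 + u *\<^sub>R Complex x t2 \<in> A \<inter> {p. Re p = x}"
    by (intro convexD_alt[OF assms]) auto
  moreover have "(1 - u) *\<^sub>R Complex x t1 + u *\<^sub>R Complex x t2 = Complex x ((1 - u) *\<^sub>R t1 + u *\<^sub>R t2)"
    by (simp add: complex_eq_iff algebra_simps)
  ultimately show "(1 - u) *\<^sub>R t1 + u *\<^sub>R t2 \<in> {t. Complex x t \<in> A}" by simp
qed

text \<open>Chain rule along a vertical line: differentiating \<open>Im (G (\<psi> (x + i t)))\<close> in \<open>t\<close>
  picks up a factor \<open>i\<close>, which turns the imaginary part into a real part.\<close>
lemma Im_along_vertical_line_deriv:
  assumes "(\<psi> has_field_derivative \<psi>') (at (Complex x t))"
    and "(G has_field_derivative G') (at (\<psi> (Complex x t)))"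
  shows "((\<lambda>s. Im (G (\<psi> (Complex x s)))) has_real_derivative Re (G' * \<psi>')) (at t)"
proof -
  have line: "Complex x s = of_real x + \<i> * of_real s" for s by (simp add: complex_eq_iff)
  have "((\<lambda>\<zeta>. of_real x + \<i> * \<zeta>) has_field_derivative \<i>) (at (of_real t))"
    by (auto intro!: derivative_eq_intros)
  then have "((\<lambda>\<zeta>. G (\<psi> (of_real x + \<i> * \<zeta>))) has_field_derivative G' * (\<psi>' * \<i>)) (at (of_real t))"
    using assms unfolding line by (intro DERIV_chain2[of G] DERIV_chain2[of \<psi>]) auto
  from has_field_derivative_Im[OF has_vector_derivative_real_field[OF this]]
  show ?thesis unfolding line by (simp add: mult.commute mult.left_commute)
qed

lemma pos_deriv_strict_mono_on:
  fixes \<phi> :: "real \<Rightarrow> real"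
  assumes "is_interval T" and deriv: "\<And>t. t \<in> T \<Longrightarrow> \<exists>d. (\<phi> has_real_derivative d) (at t) \<and> d > 0"
  shows "strict_mono_on T \<phi>"
proof (rule strict_mono_onI)
  fix r s assume "r \<in> T" "s \<in> T" "r < s"
  show "\<phi> r < \<phi> s"
  proof (rule DERIV_pos_imp_increasing[OF \<open>r < s\<close>])
    fix u assume "r \<le> u" "u \<le> s"
    then have "u \<in> T" using assms(1) \<open>r \<in> T\<close> \<open>s \<in> T\<close> unfolding is_interval_1 by blast
    then show "\<exists>d. (\<phi> has_real_derivative d) (at u) \<and> d > 0" by (rule deriv)
  qed
qed

lemma pos_deriv_continuous_on:
  fixes \<phi> :: "real \<Rightarrow> real"
  assumes "\<And>t. t \<in> T \<Longrightarrow> \<exists>d. (\<phi> has_real_derivative d) (at t) \<and> d > 0"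
  shows "continuous_on T \<phi>"
proof (rule continuous_at_imp_continuous_on, rule ballI)
  fix t assume "t \<in> T"
  then obtain d where "(\<phi> has_real_derivative d) (at t)" using assms by blast
  then show "isCont \<phi> t" by (rule DERIV_isCont)
qed

text \<open>Then along that slice
  \<open>Im G\<close> is a continuous strictly increasing function \<open>\<phi>\<close> of \<open>Im F\<close>: with \<open>\<psi> = F\<^sup>-\<^sup>1\<close>,
  \<open>\<phi>(t) = Im G(\<psi>(x + i t))\<close> has derivative \<open>Re (G'/F') > 0\<close>.\<close>
lemma vertical_level_function:
  assumes S: "open S" and FH: "F holomorphic_on S" and injF: "inj_on F S"
    and slice: "convex (F ` S \<inter> {p. Re p = x})"
    and GH: "G holomorphic_on S" and pos: "\<And>z. z \<in> S \<Longrightarrow> Re (deriv G z / deriv F z) > 0"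
  obtains \<phi> where "\<And>z. z \<in> S \<Longrightarrow> Re (F z) = x \<Longrightarrow> Im (G z) = \<phi> (Im (F z))"
    and "strict_mono_on {t. Complex x t \<in> F ` S} \<phi>"
    and "continuous_on {t. Complex x t \<in> F ` S} \<phi>"
proof -
  define T where "T = {t. Complex x t \<in> F ` S}"
  obtain \<psi> where \<psi>H: "\<psi> holomorphic_on F ` S"
    and \<psi>_deriv: "\<And>z. z \<in> S \<Longrightarrow> deriv F z * deriv \<psi> (F z) = 1"
    and \<psi>_inv: "\<And>z. z \<in> S \<Longrightarrow> \<psi> (F z) = z"
    using holomorphic_has_inverse[OF FH S injF] by metis
  have FS: "open (F ` S)" using open_mapping_thm3[OF FH S injF] .
  define \<phi> where "\<phi> t = Im (G (\<psi> (Complex x t)))" for t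
  have \<phi>_deriv: "\<exists>d. (\<phi> has_real_derivative d) (at t) \<and> d > 0" if "t \<in> T" for t
  proof -
    have tS: "Complex x t \<in> F ` S" using \<open>t \<in> T\<close> by (simp add: T_def)
    then obtain z where z: "z \<in> S" and Fz: "F z = Complex x t" by auto
    have "(\<psi> has_field_derivative deriv \<psi> (F z)) (at (Complex x t))"
      using holomorphic_derivI[OF \<psi>H FS tS, of UNIV] Fz by simp
    moreover have "(G has_field_derivative deriv G z) (at (\<psi> (Complex x t)))"
      using holomorphic_derivI[OF GH S z, of UNIV] \<psi>_inv[OF z] Fz by simp
    ultimately have "(\<phi> has_real_derivative Re (deriv G z * deriv \<psi> (F z))) (at t)"
      unfolding \<phi>_def[abs_def] by (rule Im_along_vertical_line_deriv)
    moreover have "deriv G z * deriv \<psi> (F z) = deriv G z / deriv F z"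
      using inverse_unique[OF \<psi>_deriv[OF z]] by (simp add: divide_inverse)
    ultimately show ?thesis using pos[OF z] by auto
  qed
  have "is_interval T"
    unfolding T_def is_interval_convex_1 by (rule vertical_parameters_convex[OF slice])
  note mono = pos_deriv_strict_mono_on[OF this \<phi>_deriv]
    and cont = pos_deriv_continuous_on[OF \<phi>_deriv]
  have level: "Im (G z) = \<phi> (Im (F z))" if "z \<in> S" "Re (F z) = x" for z
  proof -
    have "Complex x (Im (F z)) = F z" using that by (simp add: complex_eq_iff)
    then show ?thesis using \<psi>_inv[OF \<open>z \<in> S\<close>] by (simp add: \<phi>_def)
  qed
  show ?thesis using that[OF level mono[unfolded T_def] cont[unfolded T_def]] by blast
qed

text \<open>Standing hypotheses of the shear construction on an open set \<open>S\<close>: \<open>F = h + g\<close> is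
  univalent with convex vertical slices, and \<open>f = h + conj g\<close> is locally univalent and
  sense-preserving (dilatation \<open>\<omega> = g'/h'\<close> of modulus \<open>< 1\<close>).\<close>
definition shear_data :: "complex set \<Rightarrow> (complex \<Rightarrow> complex) \<Rightarrow> (complex \<Rightarrow> complex) \<Rightarrow> bool" where
  "shear_data S h g \<longleftrightarrow> open S \<and> h holomorphic_on S \<and> g holomorphic_on S
     \<and> inj_on (\<lambda>z. h z + g z) S
     \<and> (\<forall>x. convex ((\<lambda>z. h z + g z) ` S \<inter> {p. Re p = x}))
     \<and> (\<forall>z\<in>S. deriv h z \<noteq> 0 \<and> norm (deriv g z / deriv h z) < 1)"

text \<open>Under the shear hypotheses, on each vertical line \<open>Re F = x\<close> the imaginary part of
  \<open>f\<close> is a continuous strictly increasing function of the imaginary part of \<open>F\<close>; this is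
  the key observation of Clunie and Sheil-Small, since \<open>Re f = Re F\<close>.\<close>
lemma shear_level_function:
  assumes "shear_data S h g"
  obtains \<phi> where "\<And>z. z \<in> S \<Longrightarrow> Re (h z + g z) = x \<Longrightarrow> Im (h z + cnj (g z)) = \<phi> (Im (h z + g z))"
    and "strict_mono_on {t. Complex x t \<in> (\<lambda>z. h z + g z) ` S} \<phi>"
    and "continuous_on {t. Complex x t \<in> (\<lambda>z. h z + g z) ` S} \<phi>"
proof -
  define F G where "F = (\<lambda>z. h z + g z)" and "G = (\<lambda>z. h z - g z)"
  have S: "open S" and hH: "h holomorphic_on S" and gH: "g holomorphic_on S"
    and injF: "inj_on F S" and slice: "convex (F ` S \<inter> {p. Re p = x})"
    and dil: "\<And>z. z \<in> S \<Longrightarrow> deriv h z \<noteq> 0 \<and> norm (deriv g z / deriv h z) < 1"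
    using assms unfolding shear_data_def F_def by auto
  have FH: "F holomorphic_on S" and GH: "G holomorphic_on S"
    unfolding F_def G_def using hH gH by (auto intro: holomorphic_intros)
  have pos: "Re (deriv G z / deriv F z) > 0" if z: "z \<in> S" for z
  proof -
    have dh: "h field_differentiable at z" and dg: "g field_differentiable at z"
      using hH gH S z by (auto intro: holomorphic_on_imp_differentiable_at)
    have "deriv G z / deriv F z = (deriv h z - deriv g z) / (deriv h z + deriv g z)"
      unfolding F_def G_def using deriv_add[OF dh dg] deriv_diff[OF dh dg] by simp
    also have "\<dots> = (1 - deriv g z / deriv h z) / (1 + deriv g z / deriv h z)"
      using dil[OF z] by (simp add: divide_simps)
    finally show ?thesis using Re_dilatation_quotient_pos dil[OF z] by simp
  qed
  obtain \<phi> where level: "\<And>z. z \<in> S \<Longrightarrow> Re (F z) = x \<Longrightarrow> Im (G z) = \<phi> (Im (F z))"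
    and mono: "strict_mono_on {t. Complex x t \<in> F ` S} \<phi>"
    and cont: "continuous_on {t. Complex x t \<in> F ` S} \<phi>"
    using vertical_level_function[OF S FH injF slice GH pos] by blast
  show ?thesis
  proof (rule that)
    show "Im (h z + cnj (g z)) = \<phi> (Im (h z + g z))" if "z \<in> S" "Re (h z + g z) = x" for z
      using level[of z] that by (simp add: F_def G_def)
  qed (use mono cont in \<open>simp_all add: F_def\<close>)
qed

text \<open>Clunie--Sheil-Small, univalence: \<open>Re f = Re F\<close> and, on each vertical line,
  \<open>Im f\<close> is strictly increasing in \<open>Im F\<close>; so \<open>f\<close> is injective because \<open>F\<close> is.\<close>
lemma shear_injective:
  assumes "shear_data S h g"
  shows "inj_on (\<lambda>z. h z + cnj (g z)) S"
proof (rule inj_onI)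
  define F where "F = (\<lambda>z. h z + g z)"
  fix z1 z2 assume z: "z1 \<in> S" "z2 \<in> S" and eq: "h z1 + cnj (g z1) = h z2 + cnj (g z2)"
  define x where "x = Re (F z1)"
  have x2: "Re (F z2) = x" using arg_cong[OF eq, of Re] by (simp add: x_def F_def)
  obtain \<phi> where \<phi>: "\<And>z. z \<in> S \<Longrightarrow> Re (F z) = x \<Longrightarrow> Im (h z + cnj (g z)) = \<phi> (Im (F z))"
    and mono: "strict_mono_on {t. Complex x t \<in> F ` S} \<phi>"
    unfolding F_def using shear_level_function[OF assms, of x] by blast
  have mem: "Im (F z) \<in> {t. Complex x t \<in> F ` S}" if "z \<in> S" "Re (F z) = x" for z
  proof -
    have "Complex x (Im (F z)) = F z" using that by (simp add: complex_eq_iff)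
    then show ?thesis using that by auto
  qed
  have "\<phi> (Im (F z1)) = \<phi> (Im (F z2))"
    using \<phi>[OF z(1) x_def[symmetric]] \<phi>[OF z(2) x2] eq by simp
  then have "Im (F z1) = Im (F z2)"
    using strict_mono_on_imp_inj_on[OF mono] mem z x2 x_def by (auto dest: inj_onD)
  then have "F z1 = F z2" using x2 x_def by (simp add: complex_eq_iff)
  moreover have "inj_on F S" using assms unfolding shear_data_def F_def by simp
  ultimately show "z1 = z2" using z by (simp add: inj_on_eq_iff)
qed

text \<open>Clunie--Sheil-Small, vertical convexity: each vertical slice of \<open>f(S)\<close> is the
  continuous image \<open>t \<mapsto> x + i \<phi>(t)\<close> of the interval parametrising the slice of \<open>F(S)\<close>.\<close>
lemma shear_vertical_slices_connected:
  assumes "shear_data S h g"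
  shows "connected ((\<lambda>z. h z + cnj (g z)) ` S \<inter> {p. Re p = x})"
proof -
  define F f where "F = (\<lambda>z. h z + g z)" and "f = (\<lambda>z. h z + cnj (g z))"
  define T where "T = {t. Complex x t \<in> F ` S}"
  have Re_f: "Re (f z) = Re (F z)" for z by (simp add: F_def f_def)
  obtain \<phi> where \<phi>: "\<And>z. z \<in> S \<Longrightarrow> Re (F z) = x \<Longrightarrow> Im (f z) = \<phi> (Im (F z))"
    and cont: "continuous_on T \<phi>"
    unfolding F_def f_def T_def using shear_level_function[OF assms, of x] by blast
  have "f ` S \<inter> {p. Re p = x} = (\<lambda>t. Complex x (\<phi> t)) ` T"
  proof (intro equalityI subsetI)
    fix p assume "p \<in> f ` S \<inter> {p. Re p = x}"
    then obtain z where z: "z \<in> S" and p: "p = f z" and x: "Re (F z) = x" using Re_f by auto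
    then have "F z = Complex x (Im (F z))" and "p = Complex x (\<phi> (Im (F z)))"
      using \<phi>[OF z x] Re_f by (simp_all add: complex_eq_iff)
    with z show "p \<in> (\<lambda>t. Complex x (\<phi> t)) ` T" unfolding T_def by (metis (mono_tags) image_eqI mem_Collect_eq)
  next
    fix p assume "p \<in> (\<lambda>t. Complex x (\<phi> t)) ` T"
    then obtain t where "t \<in> T" and p: "p = Complex x (\<phi> t)" by blast
    then obtain z where z: "z \<in> S" and Fz: "F z = Complex x t" unfolding T_def by auto
    then have "p = f z" using \<phi>[OF z] Re_f p by (simp add: complex_eq_iff)
    moreover have "Re p = x" using p by simp
    ultimately show "p \<in> f ` S \<inter> {p. Re p = x}" using z by blast
  qed
  moreover have "convex (F ` S \<inter> {p. Re p = x})" using assms unfolding shear_data_def F_def by simp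
  then have "connected T" unfolding T_def by (intro convex_connected vertical_parameters_convex)
  moreover have "continuous_on T (\<lambda>t. Complex x (\<phi> t))"
    using cont unfolding Complex_eq by (intro continuous_intros)
  ultimately show ?thesis unfolding f_def[symmetric] by (simp add: connected_continuous_image)
qed

lemma F_alpha_shear_data:
  assumes "-1 \<le> \<alpha>" "\<alpha> \<le> 1"
    and "h holomorphic_on unit_disc" "g holomorphic_on unit_disc" "loc_univ_sense_pres h g"
    and sum: "\<forall>z\<in>unit_disc. h z + g z = F_alpha \<alpha> z"
  shows "shear_data unit_disc h g"
proof -
  have "inj_on (\<lambda>z. h z + g z) unit_disc"
    using F_alpha_inj[OF assms(1,2)] inj_on_cong[of unit_disc "\<lambda>z. h z + g z" "F_alpha \<alpha>"] sum by simp
  moreover have "(\<lambda>z. h z + g z) ` unit_disc = F_alpha \<alpha> ` unit_disc"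
    using sum by (simp cong: image_cong)
  ultimately show ?thesis
    using assms F_alpha_vertical_slices_convex[OF assms(1,2)]
    unfolding shear_data_def loc_univ_sense_pres_def by (simp add: unit_disc_def)
qed

theorem mainTheorem1:
  fixes \<alpha> :: real
  assumes "-1 \<le> \<alpha>" and "\<alpha> \<le> 1"
  shows "(\<forall>z\<in>unit_disc. Re ((1 - z^2) * deriv (F_alpha \<alpha>) z) > 0)
       \<and> inj_on (F_alpha \<alpha>) unit_disc
       \<and> convex_imag_dir (F_alpha \<alpha> ` unit_disc)
       \<and> (\<forall>h g. h holomorphic_on unit_disc \<longrightarrow> g holomorphic_on unit_disc \<longrightarrow>
              loc_univ_sense_pres h g \<longrightarrow>
              h 0 = 0 \<longrightarrow> g 0 = 0 \<longrightarrow> deriv h 0 = 1 \<longrightarrow> deriv g 0 = 0 \<longrightarrow>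
              (\<forall>z\<in>unit_disc. h z + g z = F_alpha \<alpha> z) \<longrightarrow>
              (\<lambda>z. h z + cnj (g z)) \<in> S_H \<and>
              convex_imag_dir ((\<lambda>z. h z + cnj (g z)) ` unit_disc))"
proof (intro conjI allI impI ballI)
  show "Re ((1 - z^2) * deriv (F_alpha \<alpha>) z) > 0" if "z \<in> unit_disc" for z
    using F_alpha_Re_pos[OF assms] that by (simp add: mem_unit_disc)
  show "inj_on (F_alpha \<alpha>) unit_disc" by (rule F_alpha_inj[OF assms])
  show "convex_imag_dir (F_alpha \<alpha> ` unit_disc)"
    unfolding convex_imag_dir_def using F_alpha_vertical_slices_convex[OF assms] convex_connected by blast
next
  fix h g :: "complex \<Rightarrow> complex"
  assume hH: "h holomorphic_on unit_disc" and gH: "g holomorphic_on unit_disc"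
    and lu: "loc_univ_sense_pres h g" and "h 0 = 0" "g 0 = 0" "deriv h 0 = 1" "deriv g 0 = 0"
    and "\<forall>z\<in>unit_disc. h z + g z = F_alpha \<alpha> z"
  then have shear: "shear_data unit_disc h g" using F_alpha_shear_data[OF assms] by blast
  show "(\<lambda>z. h z + cnj (g z)) \<in> S_H"
    unfolding S_H_def using hH gH lu \<open>h 0 = 0\<close> \<open>g 0 = 0\<close> \<open>deriv h 0 = 1\<close> shear_injective[OF shear]
    by auto
  show "convex_imag_dir ((\<lambda>z. h z + cnj (g z)) ` unit_disc)"
    unfolding convex_imag_dir_def using shear_vertical_slices_connected[OF shear] by blast
qed

end
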